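(* In the setting below, there are constants $\Lambda>0$, $\sigma\ge0$ such that $|xx'|\le\Lambda|f(x)f(x')|+\sigma$ for all $x,x'\in X$, where $f=(f_a)_{a\in A}:X\to\prod_{a\in A}T_a$.
   Context: Setting: $Z$ is a bounded metric space with $\operatorname{diam}Z>0$, $\mu=\pi/\operatorname{diam}Z$, $A$ a set with $|A|=n+1$, and $\delta,\gamma\in(0,1)$, $\lambda\ge1$, $r\in(0,1)$ sufficiently small with $\lambda r<\delta$, $r<\operatorname{diam}Z$. $(\mathcal U_j)_{j\in\mathbb N}$ is a $\gamma$-separated characteristic sequence of open coverings of $Z$, each colored by $A$, $\mathcal U_j=\bigcup_{a\in A}\mathcal U_j^a$, with parameter $r$ and characteristic constants $\delta,\lambda$; that is: each $\mathcal U_j^a$ consists of pairwise disjoint open sets; (1) $\sup_{U\in\mathcal U_j}\operatorname{diam}U\le r^j$ and every ball of radius $\delta r^j$ in $Z$ is contained in some member of $\mathcal U_j$; (2) for every $a,j$ and $z\in Z$ there is $U\in\mathcal U_j^a$ with $\operatorname{dist}(z,U)\le\lambda r^j$; (3) for every $a$ and distinct $U\in\mathcal U_j^a$, $U'\in\mathcal U_{j'}^a$ with $j'\le j$, either $B_s(U)\cap U'=\emptyset$ or $B_s(U)\subset U'$, and if $j'<j$ there is $U''\in\mathcal U_j^a$ with $B_s(U'')\subset U'$, where $s=\gamma r^j$ and $B_s(U)=\{z:\operatorname{dist}(z,U)<s\}$. Trees: put $\mathcal U_0^a=\{Z\}$. $T_a$ is the tree (edges of length $1$, path metric) with vertex set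 $V^a=\bigsqcup_{j\ge0}V_j^a$, where $V_j^a$ is in bijection with $\mathcal U_j^a$ (root $v_a$ corresponds to $Z$); $v\in V_j^a$, $v'\in V_{j'}^a$, $j'<j$, are joined by an edge iff the corresponding sets satisfy $U\subset U'$ and $j'$ is the maximal level $<j$ for which some member of $\mathcal U_{j'}^a$ contains $U$. $\prod_{a\in A}T_a$ carries the $\ell^2$ product metric. Cone: $\operatorname{Co}(Z)=Z\times[0,\infty)/Z\times\{0\}$ with vertex $o$ and metric $|xx'|$ for $x=(z,t),x'=(z',t')$ equal to the length of the side $\bar x\bar x'$ of a triangle in $\mathrm H^2$ with sides $t,t'$ from $\bar o$ enclosing angle $\mu|zz'|$. Let $R=\ln(1/r)$, $Z_j=\{(z,jR):z\in Z\}$ for $j\ge1$, $Z_0=\{o\}$, $X=\bigcup_{j\ge0}Z_j$. Define $f_a:X\to T_a$ by $f_a(o)=v_a$ and, for $x=(z,jR)$, $j\ge1$, $f_a(x)$ is the vertex of $V_j^a$ corresponding to a (fixed choice of) member $U\in\mathcal U_j^a$ closest to $z$, i.e. minimizing $\operatorname{dist}(z,U)$. *)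

theory Defs
  imports "HOL-Analysis.Analysis"
begin

definition nbhd :: "'z::metric_space set \<Rightarrow> real \<Rightarrow> 'z set \<Rightarrow> 'z set" where
  "nbhd Z s U = {y \<in> Z. infdist y U < s}"

text \<open>gamma-separated characteristic sequence (U_j)_{j>=1} of open coverings of Z,
  colored by A, with parameter r and characteristic constants delta, lam.
  Uc j a is the colour class U_j^a.\<close>
definition char_seq ::
  "'z::metric_space set \<Rightarrow> 'a set \<Rightarrow> real \<Rightarrow> real \<Rightarrow> real \<Rightarrow> real \<Rightarrow> (nat \<Rightarrow> 'a \<Rightarrow> 'z set set) \<Rightarrow> bool" where
  "char_seq Z A r \<delta> lam \<gamma> Uc \<longleftrightarrow>
     (\<forall>j\<ge>1. \<forall>a\<in>A. (\<forall>U\<in>Uc j a. U \<noteq> {} \<and> U \<subseteq> Z \<and> openin (top_of_set Z) U)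
                     \<and> pairwise disjnt (Uc j a))
   \<and> (\<forall>j\<ge>1. Z = \<Union>(\<Union>a\<in>A. Uc j a))
   \<and> (\<forall>j\<ge>1. \<forall>a\<in>A. \<forall>U\<in>Uc j a. diameter U \<le> r ^ j)
   \<and> (\<forall>j\<ge>1. \<forall>z\<in>Z. \<exists>a\<in>A. \<exists>U\<in>Uc j a. ball z (\<delta> * r ^ j) \<inter> Z \<subseteq> U)
   \<and> (\<forall>j\<ge>1. \<forall>a\<in>A. \<forall>z\<in>Z. \<exists>U\<in>Uc j a. infdist z U \<le> lam * r ^ j)
   \<and> (\<forall>a\<in>A. \<forall>j j'. 1 \<le> j' \<and> j' \<le> j \<longrightarrow>
        (\<forall>U\<in>Uc j a. \<forall>U'\<in>Uc j' a. U \<noteq> U' \<longrightarrow>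
            nbhd Z (\<gamma> * r ^ j) U \<inter> U' = {} \<or> nbhd Z (\<gamma> * r ^ j) U \<subseteq> U')
      \<and> (j' < j \<longrightarrow> (\<forall>U'\<in>Uc j' a. \<exists>U''\<in>Uc j a. nbhd Z (\<gamma> * r ^ j) U'' \<subseteq> U')))"

definition lev :: "'z set \<Rightarrow> (nat \<Rightarrow> 'a \<Rightarrow> 'z set set) \<Rightarrow> nat \<Rightarrow> 'a \<Rightarrow> 'z set set" where
  "lev Z Uc j a = (if j = 0 then {Z} else Uc j a)"

definition tree_verts :: "'z set \<Rightarrow> (nat \<Rightarrow> 'a \<Rightarrow> 'z set set) \<Rightarrow> 'a \<Rightarrow> (nat \<times> 'z set) set" where
  "tree_verts Z Uc a = {(j, U). U \<in> lev Z Uc j a}"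

definition parent_edge :: "'z set \<Rightarrow> (nat \<Rightarrow> 'a \<Rightarrow> 'z set set) \<Rightarrow> 'a \<Rightarrow> (nat \<times> 'z set) \<Rightarrow> (nat \<times> 'z set) \<Rightarrow> bool" where
  "parent_edge Z Uc a v w \<longleftrightarrow>
     v \<in> tree_verts Z Uc a \<and> w \<in> tree_verts Z Uc a \<and>
     fst w < fst v \<and> snd v \<subseteq> snd w \<and>
     (\<forall>k. fst w < k \<and> k < fst v \<longrightarrow> \<not> (\<exists>W \<in> lev Z Uc k a. snd v \<subseteq> W))"

definition tree_edges :: "'z set \<Rightarrow> (nat \<Rightarrow> 'a \<Rightarrow> 'z set set) \<Rightarrow> 'a \<Rightarrow> ((nat \<times> 'z set) \<times> (nat \<times> 'z set)) set" where
  "tree_edges Z Uc a = {(v, w). parent_edge Z Uc a v w \<or> parent_edge Z Uc a w v}"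

definition tree_dist :: "'z set \<Rightarrow> (nat \<Rightarrow> 'a \<Rightarrow> 'z set set) \<Rightarrow> 'a \<Rightarrow> (nat \<times> 'z set) \<Rightarrow> (nat \<times> 'z set) \<Rightarrow> real" where
  "tree_dist Z Uc a v w = real (LEAST n. (v, w) \<in> (tree_edges Z Uc a) ^^ n)"

definition closest_choice :: "'z::metric_space set \<Rightarrow> 'a set \<Rightarrow> (nat \<Rightarrow> 'a \<Rightarrow> 'z set set) \<Rightarrow> ('a \<Rightarrow> nat \<Rightarrow> 'z \<Rightarrow> 'z set) \<Rightarrow> bool" where
  "closest_choice Z A Uc sel \<longleftrightarrow>
     (\<forall>a\<in>A. \<forall>j\<ge>1. \<forall>z\<in>Z. sel a j z \<in> Uc j a \<and> (\<forall>U\<in>Uc j a. infdist z (sel a j z) \<le> infdist z U))"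

text \<open>The map f_a : X \<rightarrow> T_a. A point (z, j) stands for (z, jR) in the cone; for j = 0 it is the vertex o.\<close>
definition fmap :: "'z set \<Rightarrow> ('a \<Rightarrow> nat \<Rightarrow> 'z \<Rightarrow> 'z set) \<Rightarrow> 'a \<Rightarrow> 'z \<times> nat \<Rightarrow> nat \<times> 'z set" where
  "fmap Z sel a x = (if snd x = 0 then (0, Z) else (snd x, sel a (snd x) (fst x)))"

definition prod_tree_dist :: "'z set \<Rightarrow> 'a set \<Rightarrow> (nat \<Rightarrow> 'a \<Rightarrow> 'z set set) \<Rightarrow> ('a \<Rightarrow> nat \<Rightarrow> 'z \<Rightarrow> 'z set) \<Rightarrow> 'z \<times> nat \<Rightarrow> 'z \<times> nat \<Rightarrow> real" where
  "prod_tree_dist Z A Uc sel x x' =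
     sqrt (\<Sum>a\<in>A. (tree_dist Z Uc a (fmap Z sel a x) (fmap Z sel a x')) ^ 2)"

text \<open>Metric of the hyperbolic cone Co(Z) (mu = pi / diam Z): by the hyperbolic law of cosines,
  |xx'| for x = (z,t), x' = (z',t') is arcosh(cosh t cosh t' - sinh t sinh t' cos(mu |zz'|)).\<close>
definition cone_dist :: "real \<Rightarrow> 'z::metric_space \<Rightarrow> real \<Rightarrow> 'z \<Rightarrow> real \<Rightarrow> real" where
  "cone_dist \<mu> z t z' t' = arcosh (cosh t * cosh t' - sinh t * sinh t' * cos (\<mu> * dist z z'))"

end

theory Submission
  imports Defs
begin

(* Write R = ln (1/r), so that r^k = exp (-k R).  For x = (z, j R) and x' = (z', j' R) take
   k <= min j j' with |z z'| <= (2 lam + 2) r^k unless k = 0, and with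
   |z z'| > (2 lam + 2) r^(k+1) unless k = min j j'.  The hyperbolic law of cosines then gives
   |x x'| <= (j + j' - 2 k) R + O(1).
   On the tree side, the number of ancestors of a vertex of T_a at levels above k (all of them,
   or those containing resp. avoiding a fixed point) changes by at most one along an edge, so
   differences of such counts bound tree distances from below.  By the Lebesgue-number property
   every level strictly between k and j carries an ancestor of f_a(x) for some colour a, and if
   z and z' are far apart at scale r^(k+1), then f_a(x) and f_a(x') have no common ancestor above
   level k.  Summing over the n + 1 colours gives
   j + j' - 2 k - 2 <= sum_a |f_a(x) f_a(x')| <= sqrt (n + 1) |f(x) f(x')|. *)

lemma one_minus_cos_le_half_square: "1 - cos x \<le> x\<^sup>2 / 2"
  for x :: real
proof -
  have "1 - cos x = 2 * sin (x / 2) ^ 2"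
    using cos_double_sin[of "x / 2"] by simp
  also have "sin (x / 2) ^ 2 \<le> (x / 2) ^ 2"
    using abs_sin_x_le_abs_x[of "x / 2"] by (metis abs_ge_zero power2_abs power_mono)
  finally show ?thesis
    by (simp add: power_divide)
qed

lemma cosh_le_exp_abs: "cosh x \<le> exp \<bar>x\<bar>"
  for x :: real
proof -
  have "exp x \<le> exp \<bar>x\<bar>" "exp (- x) \<le> exp \<bar>x\<bar>"
    by simp_all
  then show ?thesis
    unfolding cosh_field_def by argo
qed

lemma arcosh_cosine_law_le:
  fixes t t' \<theta> M :: real
  assumes "0 \<le> t" "0 \<le> t'" and "\<bar>t - t'\<bar> \<le> M" and "exp (t + t') * \<theta>\<^sup>2 \<le> exp M"
  shows "arcosh (cosh t * cosh t' - sinh t * sinh t' * cos \<theta>) \<le> M + ln 3"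
proof -
  define X where "X = cosh t * cosh t' - sinh t * sinh t' * cos \<theta>"
  have X_eq: "X = cosh (t - t') + sinh t * sinh t' * (1 - cos \<theta>)"
    unfolding X_def cosh_diff by (simp add: algebra_simps)
  have sinh_prod_nonneg: "0 \<le> sinh t * sinh t'"
    using assms(1,2) by simp
  have X_ge_1: "1 \<le> X"
    unfolding X_eq using cosh_real_ge_1[of "t - t'"] sinh_prod_nonneg
    by (simp add: add_increasing2)
  have "cosh (t - t') \<le> exp \<bar>t - t'\<bar>"
    by (rule cosh_le_exp_abs)
  also have "\<dots> \<le> exp M"
    using assms(3) by simp
  finally have cosh_le: "cosh (t - t') \<le> exp M" .
  have "sinh t * sinh t' \<le> (exp t / 2) * (exp t' / 2)"
    using assms(1,2) by (intro mult_mono) (auto simp: sinh_def divide_right_mono)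
  also have "\<dots> = exp (t + t') / 4"
    by (simp add: exp_add)
  finally have "sinh t * sinh t' * (1 - cos \<theta>) \<le> exp (t + t') / 4 * (\<theta>\<^sup>2 / 2)"
    using one_minus_cos_le_half_square[of \<theta>] sinh_prod_nonneg by (intro mult_mono) auto
  also have "\<dots> \<le> exp M / 8"
    using assms(4) by simp
  finally have "X \<le> 3 / 2 * exp M"
    using cosh_le exp_gt_zero[of M] unfolding X_eq by linarith
  have "arcosh X = ln (X + sqrt (X\<^sup>2 - 1))"
    using X_ge_1 by (rule arcosh_real_def)
  also have "\<dots> \<le> ln (2 * X)"
    using X_ge_1 real_sqrt_le_mono[of "X\<^sup>2 - 1" "X\<^sup>2"] by (simp add: add_pos_nonneg)
  also have "\<dots> \<le> ln (3 * exp M)"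
    using \<open>X \<le> 3 / 2 * exp M\<close> X_ge_1 by simp
  also have "\<dots> = M + ln 3"
    by (simp add: ln_mult)
  finally show ?thesis
    unfolding X_def .
qed

lemma cone_dist_le_levels:
  fixes \<mu> r B :: real and j j' k :: nat
  assumes r: "0 < r" "r < 1" and "1 \<le> B" and k: "k \<le> j" "k \<le> j'"
    and angle: "\<bar>\<mu> * dist z z'\<bar> \<le> B * r ^ k"
  shows "cone_dist \<mu> z (real j * ln (1 / r)) z' (real j' * ln (1 / r))
    \<le> (real j + real j' - 2 * real k) * ln (1 / r) + 2 * ln B + ln 3"
proof -
  define R where "R = ln (1 / r)"
  define M where "M = (real j + real j' - 2 * real k) * R + 2 * ln B"
  have "0 < R" "0 \<le> ln B"
    unfolding R_def using r \<open>1 \<le> B\<close> by simp_all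
  have "\<bar>real j * R - real j' * R\<bar> = \<bar>real j - real j'\<bar> * R"
    using \<open>0 < R\<close> by (simp flip: left_diff_distrib add: abs_mult)
  also have "\<dots> \<le> (real j + real j' - 2 * real k) * R"
    using k \<open>0 < R\<close> by (intro mult_right_mono) auto
  finally have diff_le: "\<bar>real j * R - real j' * R\<bar> \<le> M"
    unfolding M_def using \<open>0 \<le> ln B\<close> by simp
  have r_pow: "r ^ k = exp (- (real k * R))"
    unfolding R_def using r by (simp add: ln_div exp_of_nat_mult)
  have "(\<mu> * dist z z')\<^sup>2 \<le> (B * r ^ k)\<^sup>2"
    using angle by (metis abs_ge_zero power2_abs power_mono)
  also have "B * r ^ k = exp (ln B - real k * R)"
    using \<open>1 \<le> B\<close> by (simp add: r_pow exp_diff exp_minus divide_inverse)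
  finally have "exp (real j * R + real j' * R) * (\<mu> * dist z z')\<^sup>2
      \<le> exp (real j * R + real j' * R) * exp (2 * (ln B - real k * R))"
    by (metis exp_double exp_ge_zero mult_left_mono)
  also have "\<dots> = exp M"
    unfolding M_def by (simp add: algebra_simps flip: exp_add)
  finally have "exp (real j * R + real j' * R) * (\<mu> * dist z z')\<^sup>2 \<le> exp M" .
  then have "cone_dist \<mu> z (real j * R) z' (real j' * R) \<le> M + ln 3"
    unfolding cone_dist_def using diff_le \<open>0 < R\<close> by (intro arcosh_cosine_law_le) auto
  then show ?thesis
    unfolding M_def R_def by simp
qed

lemma infdist_less_imp_dist_less:
  assumes "A \<noteq> {}" "infdist x A < e"
  obtains y where "y \<in> A" "dist x y < e"
proof -
  have "(INF a\<in>A. dist x a) < e"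
    using assms by (simp add: infdist_notempty)
  moreover have "bdd_below ((\<lambda>a. dist x a) ` A)"
    by (rule bdd_belowI[of _ 0]) auto
  ultimately show ?thesis
    using that cINF_less_iff[OF assms(1)] by blast
qed

lemma dist_le_infdist_plus_diameter:
  assumes "bounded U" "p \<in> U"
  shows "dist z p \<le> infdist z U + diameter U"
proof -
  have "U \<noteq> {}"
    using assms(2) by auto
  have "dist z p - diameter U \<le> (INF y\<in>U. dist z y)"
  proof (rule cINF_greatest[OF \<open>U \<noteq> {}\<close>])
    fix y assume "y \<in> U"
    then have "dist y p \<le> diameter U"
      using assms by (intro diameter_bounded_bound)
    then show "dist z p - diameter U \<le> dist z y"
      using dist_triangle[of z p y] by simp
  qed
  then show ?thesis
    using infdist_notempty[OF \<open>U \<noteq> {}\<close>] by simp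
qed

lemma relpow_abs_diff_le:
  fixes \<Phi> :: "'v \<Rightarrow> real"
  assumes step: "\<And>u u'. (u, u') \<in> E \<Longrightarrow> \<bar>\<Phi> u - \<Phi> u'\<bar> \<le> 1"
    and "(v, w) \<in> E ^^ n"
  shows "\<bar>\<Phi> v - \<Phi> w\<bar> \<le> real n"
  using assms(2)
proof (induction n arbitrary: w)
  case 0
  then show ?case by simp
next
  case (Suc n)
  from Suc.prems obtain u where "(v, u) \<in> E ^^ n" "(u, w) \<in> E"
    by (rule relpow_Suc_E)
  then show ?case
    using Suc.IH step[of u w] by force
qed

definition ancestor_count ::
  "(nat \<Rightarrow> 'a \<Rightarrow> 'z set set) \<Rightarrow> 'a \<Rightarrow> nat \<Rightarrow> ('z set \<Rightarrow> bool) \<Rightarrow> nat \<times> 'z set \<Rightarrow> nat" where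
  "ancestor_count Uc a K P u = card {l. K < l \<and> l \<le> fst u \<and> (\<exists>W\<in>Uc l a. snd u \<subseteq> W \<and> P W)}"

locale characteristic_sequence =
  fixes Z :: "'z::metric_space set" and A :: "'a set" and r \<delta> lam \<gamma> :: real
    and Uc :: "nat \<Rightarrow> 'a \<Rightarrow> 'z set set"
  assumes char_seq: "char_seq Z A r \<delta> lam \<gamma> Uc" and r_pos: "0 < r" and \<gamma>_pos: "0 < \<gamma>"
begin

lemmas char_seq_conjuncts = char_seq[unfolded char_seq_def]

lemma member_nonempty: "1 \<le> j \<Longrightarrow> a \<in> A \<Longrightarrow> U \<in> Uc j a \<Longrightarrow> U \<noteq> {}"
  using char_seq_conjuncts[THEN conjunct1] by blast

lemma member_subset: "1 \<le> j \<Longrightarrow> a \<in> A \<Longrightarrow> U \<in> Uc j a \<Longrightarrow> U \<subseteq> Z"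
  using char_seq_conjuncts[THEN conjunct1] by blast

lemma diameter_member_le: "1 \<le> j \<Longrightarrow> a \<in> A \<Longrightarrow> U \<in> Uc j a \<Longrightarrow> diameter U \<le> r ^ j"
  using char_seq_conjuncts[THEN conjunct2, THEN conjunct2, THEN conjunct1] by blast

lemma exists_member_containing_ball:
  "1 \<le> j \<Longrightarrow> z \<in> Z \<Longrightarrow> \<exists>a\<in>A. \<exists>U\<in>Uc j a. ball z (\<delta> * r ^ j) \<inter> Z \<subseteq> U"
  using char_seq_conjuncts[THEN conjunct2, THEN conjunct2, THEN conjunct2, THEN conjunct1] by blast

lemma exists_member_near:
  "1 \<le> j \<Longrightarrow> a \<in> A \<Longrightarrow> z \<in> Z \<Longrightarrow> \<exists>U\<in>Uc j a. infdist z U \<le> lam * r ^ j"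
  using char_seq_conjuncts[THEN conjunct2, THEN conjunct2, THEN conjunct2, THEN conjunct2,
      THEN conjunct1]
  by blast

lemma nbhd_disjoint_or_subset:
  "a \<in> A \<Longrightarrow> 1 \<le> l \<Longrightarrow> l \<le> j \<Longrightarrow> U \<in> Uc j a \<Longrightarrow> W \<in> Uc l a \<Longrightarrow> U \<noteq> W \<Longrightarrow>
    nbhd Z (\<gamma> * r ^ j) U \<inter> W = {} \<or> nbhd Z (\<gamma> * r ^ j) U \<subseteq> W"
  using char_seq_conjuncts[THEN conjunct2, THEN conjunct2, THEN conjunct2, THEN conjunct2,
      THEN conjunct2]
  by blast

lemma member_subset_if_meets:
  assumes a: "a \<in> A" and l: "1 \<le> l" "l \<le> j" and U: "U \<in> Uc j a" and W: "W \<in> Uc l a"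
    and "y \<in> U" "y \<in> W"
  shows "U \<subseteq> W"
proof (cases "U = W")
  case False
  have "0 < \<gamma> * r ^ j"
    using \<gamma>_pos r_pos by simp
  then have U_nbhd: "U \<subseteq> nbhd Z (\<gamma> * r ^ j) U"
    using member_subset[of j a U] l U a unfolding nbhd_def by auto
  with \<open>y \<in> U\<close> \<open>y \<in> W\<close> have "nbhd Z (\<gamma> * r ^ j) U \<inter> W \<noteq> {}"
    by blast
  then show ?thesis
    using nbhd_disjoint_or_subset[OF a l U W False] U_nbhd by blast
qed simp

lemma member_eq_if_meets:
  assumes "a \<in> A" "1 \<le> j" "U \<in> Uc j a" "W \<in> Uc j a" "y \<in> U" "y \<in> W"
  shows "U = W"
  using member_subset_if_meets[of a j j U W y] member_subset_if_meets[of a j j W U y] assms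
  by blast

lemma ancestor_levels_parent_edge:
  assumes a: "a \<in> A" and edge: "parent_edge Z Uc a (j, U) (j', U')"
  shows "{l. K < l \<and> l \<le> j \<and> (\<exists>W\<in>Uc l a. U \<subseteq> W \<and> P W)} =
    {l. K < l \<and> l \<le> j' \<and> (\<exists>W\<in>Uc l a. U' \<subseteq> W \<and> P W)} \<union> (if K < j \<and> P U then {j} else {})"
    (is "?L = ?R")
proof
  from edge have "j' < j" "U \<subseteq> U'" and U: "U \<in> Uc j a" and U': "U' \<in> lev Z Uc j' a"
    and gap: "\<And>k. j' < k \<Longrightarrow> k < j \<Longrightarrow> \<not> (\<exists>W\<in>lev Z Uc k a. U \<subseteq> W)"
    unfolding parent_edge_def tree_verts_def lev_def by (auto split: if_splits)
  obtain y where "y \<in> U"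
    using member_nonempty[OF _ a U] \<open>j' < j\<close> by auto
  show "?L \<subseteq> ?R"
  proof
    fix l assume "l \<in> ?L"
    then obtain W where l: "K < l" "l \<le> j" and W: "W \<in> Uc l a" "U \<subseteq> W" "P W"
      by auto
    show "l \<in> ?R"
    proof (cases "l = j")
      case True
      then have "W = U"
        using member_eq_if_meets[of a j W U y] a W U \<open>y \<in> U\<close> \<open>j' < j\<close> by auto
      then show ?thesis
        using True W l by auto
    next
      case False
      have "1 \<le> l"
        using l by simp
      then have "l \<le> j'"
        using gap[of l] W False l unfolding lev_def by fastforce
      then have "U' \<in> Uc j' a"
        using U' \<open>1 \<le> l\<close> unfolding lev_def by simp
      then have "U' \<subseteq> W"
        using member_subset_if_meets[OF a \<open>1 \<le> l\<close> \<open>l \<le> j'\<close> _ W(1)] \<open>y \<in> U\<close> \<open>U \<subseteq> U'\<close> W(2)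
        by blast
      then show ?thesis
        using \<open>l \<le> j'\<close> l W by auto
    qed
  qed
  show "?R \<subseteq> ?L"
    using \<open>U \<subseteq> U'\<close> \<open>j' < j\<close> U by auto
qed

lemma ancestor_count_parent_edge:
  assumes "a \<in> A" and edge: "parent_edge Z Uc a (j, U) (j', U')"
  shows "ancestor_count Uc a K P (j, U)
    = ancestor_count Uc a K P (j', U') + (if K < j \<and> P U then 1 else 0)"
proof -
  have "finite {l. K < l \<and> l \<le> j' \<and> (\<exists>W\<in>Uc l a. U' \<subseteq> W \<and> P W)}"
    by (rule finite_subset[of _ "{..j'}"]) auto
  moreover have "j' < j"
    using edge unfolding parent_edge_def by auto
  ultimately show ?thesis
    unfolding ancestor_count_def fst_conv snd_conv ancestor_levels_parent_edge[OF assms]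
    by (auto simp: card_insert_if)
qed

lemma ancestor_count_diff_edge:
  assumes a: "a \<in> A" and disj: "\<And>W. \<not> (P W \<and> Q W)" and edge: "(u, u') \<in> tree_edges Z Uc a"
  shows "\<bar>(real (ancestor_count Uc a K P u) - real (ancestor_count Uc a K Q u))
    - (real (ancestor_count Uc a K P u') - real (ancestor_count Uc a K Q u'))\<bar> \<le> 1"
proof -
  have parent: "\<bar>(real (ancestor_count Uc a K P v) - real (ancestor_count Uc a K Q v))
    - (real (ancestor_count Uc a K P w) - real (ancestor_count Uc a K Q w))\<bar> \<le> 1"
    if "parent_edge Z Uc a v w" for v w
  proof -
    obtain j U j' U' where "v = (j, U)" "w = (j', U')"
      by fastforce
    then show ?thesis
      using ancestor_count_parent_edge[OF a, of j U j' U' K P]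
        ancestor_count_parent_edge[OF a, of j U j' U' K Q] disj[of U] that
      by auto
  qed
  from edge have "parent_edge Z Uc a u u' \<or> parent_edge Z Uc a u' u"
    unfolding tree_edges_def by auto
  then show ?thesis
    using parent[of u u'] parent[of u' u] by auto
qed

lemma tree_verts_reach_root:
  assumes a: "a \<in> A"
  shows "(j, U) \<in> tree_verts Z Uc a \<Longrightarrow> ((j, U), (0, Z)) \<in> (tree_edges Z Uc a)\<^sup>*"
proof (induction j arbitrary: U rule: less_induct)
  case (less j)
  show ?case
  proof (cases "j = 0")
    case True
    then show ?thesis
      using less.prems unfolding tree_verts_def lev_def by simp
  next
    case False
    then have U: "U \<in> Uc j a"
      using less.prems unfolding tree_verts_def lev_def by simp
    define S where "S = {k. k < j \<and> (\<exists>W\<in>lev Z Uc k a. U \<subseteq> W)}"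
    define k where "k = Max S"
    have "finite S"
      unfolding S_def by (rule finite_subset[of _ "{..<j}"]) auto
    moreover have "0 \<in> S"
      unfolding S_def lev_def using member_subset[OF _ a U] False by simp
    ultimately have "k \<in> S" and k_max: "\<And>l. l \<in> S \<Longrightarrow> l \<le> k"
      unfolding k_def by (auto intro: Max_in)
    then obtain W where "k < j" and W: "W \<in> lev Z Uc k a" "U \<subseteq> W"
      unfolding S_def by auto
    have "\<not> (\<exists>W\<in>lev Z Uc l a. U \<subseteq> W)" if "k < l" "l < j" for l
      using k_max[of l] that unfolding S_def by auto
    with less.prems W \<open>k < j\<close> have "parent_edge Z Uc a (j, U) (k, W)"
      unfolding parent_edge_def tree_verts_def by auto
    then have "((j, U), (k, W)) \<in> tree_edges Z Uc a"
      unfolding tree_edges_def by auto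
    moreover have "((k, W), (0, Z)) \<in> (tree_edges Z Uc a)\<^sup>*"
      using less.IH[OF \<open>k < j\<close>] W unfolding tree_verts_def by simp
    ultimately show ?thesis
      by (rule converse_rtrancl_into_rtrancl)
  qed
qed

lemma tree_verts_connected:
  assumes a: "a \<in> A" and "v \<in> tree_verts Z Uc a" "w \<in> tree_verts Z Uc a"
  shows "\<exists>n. (v, w) \<in> (tree_edges Z Uc a) ^^ n"
proof -
  have "sym (tree_edges Z Uc a)"
    unfolding tree_edges_def sym_def by auto
  have "(v, (0, Z)) \<in> (tree_edges Z Uc a)\<^sup>*" "(w, (0, Z)) \<in> (tree_edges Z Uc a)\<^sup>*"
    using tree_verts_reach_root[OF a, of "fst v" "snd v"]
      tree_verts_reach_root[OF a, of "fst w" "snd w"] assms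
    by simp_all
  then have "(v, w) \<in> (tree_edges Z Uc a)\<^sup>*"
    using symD[OF sym_rtrancl[OF \<open>sym (tree_edges Z Uc a)\<close>]] by (meson rtrancl_trans)
  then show ?thesis
    by (rule rtrancl_imp_relpow)
qed

lemma ancestor_count_diff_le_tree_dist:
  assumes a: "a \<in> A" and disj: "\<And>W. \<not> (P W \<and> Q W)"
    and "v \<in> tree_verts Z Uc a" "w \<in> tree_verts Z Uc a"
  shows "\<bar>(real (ancestor_count Uc a K P v) - real (ancestor_count Uc a K Q v))
    - (real (ancestor_count Uc a K P w) - real (ancestor_count Uc a K Q w))\<bar> \<le> tree_dist Z Uc a v w"
proof -
  define \<Phi> where "\<Phi> u = real (ancestor_count Uc a K P u) - real (ancestor_count Uc a K Q u)" for u
  have step: "\<bar>\<Phi> u - \<Phi> u'\<bar> \<le> 1" if "(u, u') \<in> tree_edges Z Uc a" for u u'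
    unfolding \<Phi>_def using ancestor_count_diff_edge[OF a disj that] .
  have "(v, w) \<in> (tree_edges Z Uc a) ^^ (LEAST n. (v, w) \<in> (tree_edges Z Uc a) ^^ n)"
    using tree_verts_connected[OF assms(1,3,4)] by (rule LeastI_ex)
  then have "\<bar>\<Phi> v - \<Phi> w\<bar> \<le> tree_dist Z Uc a v w"
    unfolding tree_dist_def using relpow_abs_diff_le[where \<Phi> = \<Phi>, OF step] by blast
  then show ?thesis
    unfolding \<Phi>_def .
qed

end

lemma fst_fmap [simp]: "fst (fmap Z sel a (z, j)) = j"
  unfolding fmap_def by simp

lemma fmap_level: "1 \<le> j \<Longrightarrow> fmap Z sel a (z, j) = (j, sel a j z)"
  unfolding fmap_def by simp

locale characteristic_sequence_choice = characteristic_sequence Z A r \<delta> lam \<gamma> Uc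
  for Z :: "'z::metric_space set" and A :: "'a set" and r \<delta> lam \<gamma> :: real and Uc +
  fixes sel :: "'a \<Rightarrow> nat \<Rightarrow> 'z \<Rightarrow> 'z set"
  assumes r_less_1: "r < 1" and lam_ge_1: "1 \<le> lam" and lam_r_less_\<delta>: "lam * r < \<delta>"
    and bounded_Z: "bounded Z" and finite_A: "finite A"
    and closest_choice: "closest_choice Z A Uc sel"
begin

lemma sel_member: "a \<in> A \<Longrightarrow> 1 \<le> j \<Longrightarrow> z \<in> Z \<Longrightarrow> sel a j z \<in> Uc j a"
  using closest_choice unfolding closest_choice_def by blast

lemma infdist_sel_le:
  assumes "a \<in> A" "1 \<le> j" "z \<in> Z"
  shows "infdist z (sel a j z) \<le> lam * r ^ j"
proof -
  obtain U where "U \<in> Uc j a" "infdist z U \<le> lam * r ^ j"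
    using exists_member_near[OF assms(2,1,3)] by blast
  then show ?thesis
    using closest_choice assms unfolding closest_choice_def by force
qed

lemma fmap_in_tree_verts: "a \<in> A \<Longrightarrow> z \<in> Z \<Longrightarrow> fmap Z sel a (z, j) \<in> tree_verts Z Uc a"
  unfolding fmap_def tree_verts_def lev_def using sel_member by auto

lemma sel_subset_coarser_member:
  assumes z: "z \<in> Z" and l: "1 \<le> l" "l < j"
  obtains b W where "b \<in> A" "W \<in> Uc l b" "sel b j z \<subseteq> W"
proof -
  obtain b W where b: "b \<in> A" and W: "W \<in> Uc l b" and ball_W: "ball z (\<delta> * r ^ l) \<inter> Z \<subseteq> W"
    using exists_member_containing_ball[OF l(1) z] by blast
  define U where "U = sel b j z"
  have U: "U \<in> Uc j b"
    unfolding U_def using sel_member b l z by simp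
  have "r ^ j \<le> r ^ Suc l"
    using l r_pos r_less_1 by (intro power_decreasing) auto
  then have "lam * r ^ j \<le> lam * r * r ^ l"
    using lam_ge_1 by (simp add: mult_left_mono)
  also have "\<dots> < \<delta> * r ^ l"
    using lam_r_less_\<delta> r_pos by simp
  finally have "infdist z U < \<delta> * r ^ l"
    unfolding U_def using infdist_sel_le[OF b _ z, of j] l by simp
  moreover have "U \<noteq> {}"
    using member_nonempty[OF _ b U] l by simp
  ultimately obtain y where "y \<in> U" "dist z y < \<delta> * r ^ l"
    by (metis infdist_less_imp_dist_less)
  moreover have "U \<subseteq> Z"
    using member_subset[OF _ b U] l by simp
  ultimately have "y \<in> W"
    using ball_W by auto
  then have "U \<subseteq> W"
    using member_subset_if_meets[OF b l(1) _ U W \<open>y \<in> U\<close>] l by simp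
  then show ?thesis
    using that b W unfolding U_def by blast
qed

lemma sum_ancestor_count_ge:
  assumes z: "z \<in> Z"
  shows "real (j - Suc K) \<le> (\<Sum>a\<in>A. real (ancestor_count Uc a K (\<lambda>_. True) (fmap Z sel a (z, j))))"
proof (cases "j = 0")
  case False
  define S where "S a = {l. K < l \<and> l \<le> j \<and> (\<exists>W\<in>Uc l a. sel a j z \<subseteq> W)}" for a
  have fin: "finite (S a)" for a
    by (rule finite_subset[of _ "{..j}"]) (auto simp: S_def)
  have "{K<..<j} \<subseteq> (\<Union>a\<in>A. S a)"
  proof
    fix l assume "l \<in> {K<..<j}"
    then obtain b W where "b \<in> A" "W \<in> Uc l b" "sel b j z \<subseteq> W"
      using sel_subset_coarser_member[OF z, of l j] by auto
    then show "l \<in> (\<Union>a\<in>A. S a)"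
      unfolding S_def using \<open>l \<in> {K<..<j}\<close> by auto
  qed
  then have "card {K<..<j} \<le> card (\<Union>a\<in>A. S a)"
    using fin finite_A by (intro card_mono) auto
  also have "\<dots> \<le> (\<Sum>a\<in>A. card (S a))"
    by (rule card_UN_le[OF finite_A])
  finally have "real (j - Suc K) \<le> (\<Sum>a\<in>A. real (card (S a)))"
    by (metis card_greaterThanLessThan of_nat_le_iff of_nat_sum)
  also have "\<dots> = (\<Sum>a\<in>A. real (ancestor_count Uc a K (\<lambda>_. True) (fmap Z sel a (z, j))))"
    using False unfolding ancestor_count_def S_def by (simp add: fmap_level)
  finally show ?thesis .
qed (simp add: sum_nonneg)

definition l1_tree_dist :: "'z \<times> nat \<Rightarrow> 'z \<times> nat \<Rightarrow> real" where
  "l1_tree_dist x x' = (\<Sum>a\<in>A. tree_dist Z Uc a (fmap Z sel a x) (fmap Z sel a x'))"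

lemma ancestor_count_above_le_tree_dist:
  fixes j j' :: nat
  assumes "a \<in> A" "z \<in> Z" "z' \<in> Z"
  defines "v \<equiv> fmap Z sel a (z, j)" and "w \<equiv> fmap Z sel a (z', j')"
  shows "real (ancestor_count Uc a j (\<lambda>_. True) w) \<le> tree_dist Z Uc a v w"
    and "real (ancestor_count Uc a j' (\<lambda>_. True) v) \<le> tree_dist Z Uc a v w"
proof -
  have "\<bar>real (ancestor_count Uc a K (\<lambda>_. True) v) - real (ancestor_count Uc a K (\<lambda>_. True) w)\<bar>
      \<le> tree_dist Z Uc a v w" for K
    using ancestor_count_diff_le_tree_dist[OF assms(1) _ fmap_in_tree_verts[OF assms(1,2)]
        fmap_in_tree_verts[OF assms(1,3)], of "\<lambda>_. True" "\<lambda>_. False" K]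
    unfolding v_def w_def ancestor_count_def by simp
  moreover have "ancestor_count Uc a j P v = 0" "ancestor_count Uc a j' P w = 0" for P
    unfolding ancestor_count_def v_def w_def by simp_all
  ultimately show "real (ancestor_count Uc a j (\<lambda>_. True) w) \<le> tree_dist Z Uc a v w"
    and "real (ancestor_count Uc a j' (\<lambda>_. True) v) \<le> tree_dist Z Uc a v w"
    by (metis abs_minus_commute abs_of_nat diff_zero of_nat_0)+
qed

lemma level_gap_le_l1_tree_dist:
  assumes "z \<in> Z" "z' \<in> Z"
  shows "\<bar>real j - real j'\<bar> - 1 \<le> l1_tree_dist (z, j) (z', j')"
proof -
  have "real (j' - Suc j) \<le> l1_tree_dist (z, j) (z', j')"
    using sum_ancestor_count_ge[OF assms(2)]
      sum_mono[OF ancestor_count_above_le_tree_dist(1)[OF _ assms]]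
    unfolding l1_tree_dist_def by (rule order_trans)
  moreover have "real (j - Suc j') \<le> l1_tree_dist (z, j) (z', j')"
    using sum_ancestor_count_ge[OF assms(1)]
      sum_mono[OF ancestor_count_above_le_tree_dist(2)[OF _ assms]]
    unfolding l1_tree_dist_def by (rule order_trans)
  ultimately show ?thesis
    by (cases "j \<le> j'") (auto simp: of_nat_diff)
qed

lemma dist_le_if_common_ancestor:
  assumes a: "a \<in> A" and z: "z \<in> Z" and z': "z' \<in> Z" and K: "K < j" "K < j'" "K < l"
    and p: "p \<in> sel a j z" and W: "W \<in> Uc l a" "p \<in> W" "sel a j' z' \<subseteq> W"
  shows "dist z z' \<le> (2 * lam + 2) * r ^ (K + 1)"
proof -
  have r_pow_le: "r ^ i \<le> r ^ (K + 1)" if "K < i" for i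
    using that r_pos r_less_1 by (intro power_decreasing) auto
  have "1 \<le> j" "1 \<le> l"
    using K by simp_all
  have "bounded (sel a j z)" "bounded W"
    using member_subset[OF \<open>1 \<le> j\<close> a sel_member[OF a \<open>1 \<le> j\<close> z]] member_subset[OF \<open>1 \<le> l\<close> a W(1)]
      bounded_Z by (auto intro: bounded_subset)
  have "dist z p \<le> infdist z (sel a j z) + diameter (sel a j z)"
    using \<open>bounded (sel a j z)\<close> p by (rule dist_le_infdist_plus_diameter)
  also have "\<dots> \<le> lam * r ^ j + r ^ j"
    using infdist_sel_le[OF a _ z] diameter_member_le[OF _ a sel_member[OF a _ z]] K
    by (intro add_mono) auto
  finally have dist_zp: "dist z p \<le> lam * r ^ (K + 1) + r ^ (K + 1)"
    using r_pow_le[OF K(1)] lam_ge_1 by (smt (verit) mult_left_mono)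
  have "dist z' p \<le> infdist z' W + diameter W"
    using \<open>bounded W\<close> W(2) by (rule dist_le_infdist_plus_diameter)
  also have "\<dots> \<le> infdist z' (sel a j' z') + r ^ l"
    using infdist_mono[OF W(3)] member_nonempty[OF _ a sel_member[OF a _ z']]
      diameter_member_le[OF _ a W(1)] K
    by (intro add_mono) auto
  also have "\<dots> \<le> lam * r ^ j' + r ^ l"
    using infdist_sel_le[OF a _ z'] K by simp
  finally have dist_z'p: "dist z' p \<le> lam * r ^ (K + 1) + r ^ (K + 1)"
    using r_pow_le[OF K(2)] r_pow_le[OF K(3)] lam_ge_1 by (smt (verit) mult_left_mono)
  have "dist z z' \<le> 2 * (lam * r ^ (K + 1) + r ^ (K + 1))"
    using dist_triangle2[of z z' p] dist_zp dist_z'p by argo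
  then show ?thesis
    by (simp add: algebra_simps)
qed

lemma ancestor_counts_le_tree_dist_if_far:
  assumes a: "a \<in> A" and z: "z \<in> Z" and z': "z' \<in> Z" and K: "K < j" "K < j'"
    and far: "(2 * lam + 2) * r ^ (K + 1) < dist z z'"
  defines "v \<equiv> fmap Z sel a (z, j)" and "w \<equiv> fmap Z sel a (z', j')"
  shows "real (ancestor_count Uc a K (\<lambda>_. True) v) + real (ancestor_count Uc a K (\<lambda>_. True) w)
    \<le> tree_dist Z Uc a v w"
proof -
  obtain p where p: "p \<in> sel a j z"
    using member_nonempty[OF _ a sel_member[OF a _ z]] K by fastforce
  have v: "v = (j, sel a j z)" and w: "w = (j', sel a j' z')"
    unfolding v_def w_def using K by (simp_all add: fmap_level)
  let ?c = "\<lambda>P u. real (ancestor_count Uc a K P u)"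
  \<comment> \<open>All ancestors of v contain p, while no ancestor of w above level K does.\<close>
  have "p \<notin> W" if "K < l" "W \<in> Uc l a" "sel a j' z' \<subseteq> W" for l W
    using dist_le_if_common_ancestor[OF a z z' K that(1) p that(2) _ that(3)] far by force
  then have "ancestor_count Uc a K (\<lambda>W. p \<in> W) w = 0"
    "ancestor_count Uc a K (\<lambda>W. p \<notin> W) w = ancestor_count Uc a K (\<lambda>_. True) w"
    unfolding ancestor_count_def w by (auto intro!: arg_cong[where f = card])
  moreover have "ancestor_count Uc a K (\<lambda>W. p \<in> W) v = ancestor_count Uc a K (\<lambda>_. True) v"
    "ancestor_count Uc a K (\<lambda>W. p \<notin> W) v = 0"
    unfolding ancestor_count_def v using p by (auto intro!: arg_cong[where f = card])
  moreover have "\<bar>(?c (\<lambda>W. p \<in> W) v - ?c (\<lambda>W. p \<notin> W) v)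
      - (?c (\<lambda>W. p \<in> W) w - ?c (\<lambda>W. p \<notin> W) w)\<bar> \<le> tree_dist Z Uc a v w"
    unfolding v_def w_def
    by (rule ancestor_count_diff_le_tree_dist[OF a _ fmap_in_tree_verts[OF a z]
          fmap_in_tree_verts[OF a z']]) simp
  ultimately show ?thesis
    by simp
qed

lemma far_levels_le_l1_tree_dist:
  assumes "z \<in> Z" "z' \<in> Z" "K < j" "K < j'" "(2 * lam + 2) * r ^ (K + 1) < dist z z'"
  shows "real (j - Suc K) + real (j' - Suc K) \<le> l1_tree_dist (z, j) (z', j')"
proof -
  have "real (j - Suc K) + real (j' - Suc K)
      \<le> (\<Sum>a\<in>A. real (ancestor_count Uc a K (\<lambda>_. True) (fmap Z sel a (z, j))))
        + (\<Sum>a\<in>A. real (ancestor_count Uc a K (\<lambda>_. True) (fmap Z sel a (z', j'))))"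
    using sum_ancestor_count_ge assms(1,2) by (intro add_mono)
  also have "\<dots> \<le> l1_tree_dist (z, j) (z', j')"
    unfolding l1_tree_dist_def sum.distrib[symmetric]
    using ancestor_counts_le_tree_dist_if_far[OF _ assms] by (rule sum_mono)
  finally show ?thesis .
qed

lemma exists_level_l1_tree_dist_ge:
  assumes z: "z \<in> Z" and z': "z' \<in> Z"
  obtains k where "k \<le> j" "k \<le> j'" "k = 0 \<or> dist z z' \<le> (2 * lam + 2) * r ^ k"
    "real j + real j' - 2 * real k - 2 \<le> l1_tree_dist (z, j) (z', j')"
proof (cases "min j j' = 0 \<or> dist z z' \<le> (2 * lam + 2) * r ^ min j j'")
  case True
  moreover have "real j + real j' - 2 * real (min j j') - 2 \<le> l1_tree_dist (z, j) (z', j')"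
    using level_gap_le_l1_tree_dist[OF z z', of j j'] by (cases "j \<le> j'") auto
  ultimately show ?thesis
    using that[of "min j j'"] by auto
next
  case False
  then have "(2 * lam + 2) * r ^ ((min j j' - 1) + 1) < dist z z'"
    by simp
  then obtain K where "K \<le> min j j' - 1"
    and below: "\<And>i. i < K \<Longrightarrow> \<not> (2 * lam + 2) * r ^ (i + 1) < dist z z'"
    and far: "(2 * lam + 2) * r ^ (K + 1) < dist z z'"
    using ex_least_nat_le[where P = "\<lambda>k. (2 * lam + 2) * r ^ (k + 1) < dist z z'"] by blast
  have "K = 0 \<or> dist z z' \<le> (2 * lam + 2) * r ^ K"
    using below[of "K - 1"] by (cases K) auto
  moreover have "K < j" "K < j'"
    using \<open>K \<le> min j j' - 1\<close> False by auto
  moreover have "real j + real j' - 2 * real K - 2 \<le> l1_tree_dist (z, j) (z', j')"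
    using far_levels_le_l1_tree_dist[OF z z' \<open>K < j\<close> \<open>K < j'\<close> far] \<open>K < j\<close> \<open>K < j'\<close>
    by (simp add: of_nat_diff)
  ultimately show ?thesis
    using that[of K] by simp
qed

lemma l1_tree_dist_le_prod_tree_dist:
  "l1_tree_dist x x' \<le> sqrt (real (card A)) * prod_tree_dist Z A Uc sel x x'"
proof -
  have "0 \<le> tree_dist Z Uc a v w" for a v w
    unfolding tree_dist_def by simp
  then show ?thesis
    using L2_set_mult_ineq[of "\<lambda>a. tree_dist Z Uc a (fmap Z sel a x) (fmap Z sel a x')" "\<lambda>_. 1" A]
    unfolding l1_tree_dist_def prod_tree_dist_def L2_set_constant
    by (simp add: L2_set_def mult.commute)
qed

lemma cone_dist_le_prod_tree_dist:
  assumes "0 < diameter Z" and z: "z \<in> Z" and z': "z' \<in> Z"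
  defines "R \<equiv> ln (1 / r)" and "B \<equiv> max pi (pi / diameter Z * (2 * lam + 2))"
  shows "cone_dist (pi / diameter Z) z (real j * R) z' (real j' * R)
    \<le> sqrt (real (card A)) * R * prod_tree_dist Z A Uc sel (z, j) (z', j')
      + (2 * R + 2 * ln B + ln 3)"
proof -
  obtain k where k: "k \<le> j" "k \<le> j'" "k = 0 \<or> dist z z' \<le> (2 * lam + 2) * r ^ k"
    and l1: "real j + real j' - 2 * real k - 2 \<le> l1_tree_dist (z, j) (z', j')"
    by (rule exists_level_l1_tree_dist_ge[OF z z'])
  have "0 < R"
    unfolding R_def using r_pos r_less_1 by simp
  have "1 \<le> B"
    unfolding B_def using pi_gt3 by linarith
  have angle: "\<bar>pi / diameter Z * dist z z'\<bar> \<le> B * r ^ k"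
  proof (cases "k = 0")
    case True
    have "dist z z' \<le> diameter Z"
      using bounded_Z z z' by (rule diameter_bounded_bound)
    then have "pi / diameter Z * dist z z' \<le> pi / diameter Z * diameter Z"
      using \<open>0 < diameter Z\<close> by (intro mult_left_mono) simp_all
    then show ?thesis
      using True \<open>0 < diameter Z\<close> unfolding B_def by simp
  next
    case False
    then have "pi / diameter Z * dist z z' \<le> pi / diameter Z * (2 * lam + 2) * r ^ k"
      using k(3) \<open>0 < diameter Z\<close> mult_left_mono[of _ _ "pi / diameter Z"] by (simp add: mult.assoc)
    also have "\<dots> \<le> B * r ^ k"
      unfolding B_def using r_pos by (intro mult_right_mono) auto
    finally show ?thesis
      using \<open>0 < diameter Z\<close> by simp
  qed
  have "cone_dist (pi / diameter Z) z (real j * R) z' (real j' * R)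
      \<le> (real j + real j' - 2 * real k) * R + 2 * ln B + ln 3"
    unfolding R_def using r_pos r_less_1 \<open>1 \<le> B\<close> k(1,2) angle by (rule cone_dist_le_levels)
  also have "\<dots> \<le> (l1_tree_dist (z, j) (z', j') + 2) * R + 2 * ln B + ln 3"
    using l1 \<open>0 < R\<close> by (simp add: mult_right_mono)
  also have "\<dots> \<le> sqrt (real (card A)) * R * prod_tree_dist Z A Uc sel (z, j) (z', j')
      + (2 * R + 2 * ln B + ln 3)"
    using mult_right_mono[OF l1_tree_dist_le_prod_tree_dist \<open>0 < R\<close>[THEN less_imp_le]]
    by (simp add: algebra_simps)
  finally show ?thesis .
qed

end

theorem proposition3p6:
  fixes \<delta> \<gamma> lam :: real and n :: nat
  assumes "0 < \<delta>" "\<delta> < 1" "0 < \<gamma>" "\<gamma> < 1" "1 \<le> lam"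
  shows "\<exists>r0>0. \<forall>(r::real) (Z::'z::metric_space set) (A::'a set) Uc sel.
     0 < r \<and> r < 1 \<and> r < r0 \<and> lam * r < \<delta> \<and>
     bounded Z \<and> 0 < diameter Z \<and> r < diameter Z \<and>
     finite A \<and> card A = n + 1 \<and>
     char_seq Z A r \<delta> lam \<gamma> Uc \<and> closest_choice Z A Uc sel \<longrightarrow>
     (\<exists>\<Lambda>>0. \<exists>\<sigma>\<ge>0. \<forall>z\<in>Z. \<forall>z'\<in>Z. \<forall>j j'::nat.
        cone_dist (pi / diameter Z) z (real j * ln (1 / r)) z' (real j' * ln (1 / r))
          \<le> \<Lambda> * prod_tree_dist Z A Uc sel (z, j) (z', j') + \<sigma>)"
proof -
  have bound: "\<exists>\<Lambda>>0. \<exists>\<sigma>\<ge>0. \<forall>z\<in>Z. \<forall>z'\<in>Z. \<forall>j j'::nat.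
      cone_dist (pi / diameter Z) z (real j * ln (1 / r)) z' (real j' * ln (1 / r))
        \<le> \<Lambda> * prod_tree_dist Z A Uc sel (z, j) (z', j') + \<sigma>"
    if hyps: "0 < r" "r < 1" "lam * r < \<delta>" "bounded Z" "0 < diameter Z" "finite A" "card A = n + 1"
      "char_seq Z A r \<delta> lam \<gamma> Uc" "closest_choice Z A Uc sel"
    for r :: real and Z :: "'z set" and A :: "'a set" and Uc sel
  proof -
    interpret characteristic_sequence_choice Z A r \<delta> lam \<gamma> Uc sel
      using hyps assms by unfold_locales simp_all
    define B where "B = max pi (pi / diameter Z * (2 * lam + 2))"
    have "0 < sqrt (real (card A)) * ln (1 / r)"
      using hyps by simp
    moreover have "0 \<le> 2 * ln (1 / r) + 2 * ln B + ln 3"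
      using hyps pi_gt3 unfolding B_def by (simp add: add_nonneg_nonneg)
    ultimately show ?thesis
      using cone_dist_le_prod_tree_dist[OF \<open>0 < diameter Z\<close>] unfolding B_def by blast
  qed
  show ?thesis
    by (intro exI[of _ 1]) (simp add: bound)
qed

end
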